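(* Let $\boldsymbol{\beta}=(\beta_1,\dots,\beta_p)$ be an alternate base such that $\delta=\prod_{i=1}^p\beta_i$ is a Pisot unit and $\beta_1,\dots,\beta_p\in\mathbb{Q}(\delta)$. Then there exists a constant $\kappa>0$ such that for every $z\in\mathbb{N}_{\boldsymbol{\beta}}\setminus\delta\,\mathbb{N}_{\boldsymbol{\beta}}$ there is a non-identical field embedding $\psi:\mathbb{Q}(\delta)\to\mathbb{C}$ with $|\psi(z)|\ge\kappa$.
   Context: An alternate base is a $p$-tuple $\boldsymbol{\beta}=(\beta_1,\dots,\beta_p)$ of reals $\beta_i>1$, identified with the purely periodic sequence $(\beta_k)_{k\ge1}$, $\beta_{k+p}=\beta_k$. For $x\in[0,1)$ the $\boldsymbol{\beta}$-expansion $d_{\boldsymbol{\beta}}(x)=a_1a_2\cdots$ is given by the greedy algorithm $r_0=x$, $a_{k+1}=\lfloor\beta_{k+1}r_k\rfloor$, $r_{k+1}=\beta_{k+1}r_k-a_{k+1}$. For $x\ge0$, choose $k\in\mathbb{N}$ with $z=x/\delta^k\in[0,1)$, write $d_{\boldsymbol{\beta}}(z)=a_1a_2\cdots$ and set $d_{\boldsymbol{\beta}}(x)=a_1\cdots a_{pk}\,\bullet\, a_{pk+1}a_{pk+2}\cdots$ (independent of $k$ up to leading zeros). $\mathbb{N}_{\boldsymbol{\beta}}=\{x\ge0: d_{\boldsymbol{\beta}}(x)=a_1\cdots a_n\bullet 0^\omega\}$ is the set of $\boldsymbol{\beta}$-integers, and $\delta\,\mathbb{N}_{\boldsymbol{\beta}}=\{\delta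 w: w\in\mathbb{N}_{\boldsymbol{\beta}}\}$. A Pisot unit is an algebraic unit $\delta>1$ all of whose other conjugates have modulus $<1$. *)

theory Defs
  imports "HOL-Analysis.Analysis" "HOL-Computational_Algebra.Polynomial"
begin

text \<open>An alternate base is a nonempty list bs = [beta_1,...,beta_p] of reals > 1,
  identified with the periodic sequence beta_k (k >= 1), beta_{k+p} = beta_k.\<close>

definition alt_base :: "real list \<Rightarrow> bool" where
  "alt_base bs \<longleftrightarrow> bs \<noteq> [] \<and> (\<forall>b\<in>set bs. b > 1)"

definition bseq :: "real list \<Rightarrow> nat \<Rightarrow> real" where
  "bseq bs k = bs ! ((k - 1) mod length bs)"

definition delta :: "real list \<Rightarrow> real" where
  "delta bs = prod_list bs"

fun grem :: "real list \<Rightarrow> real \<Rightarrow> nat \<Rightarrow> real" where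
  "grem bs x 0 = x"
| "grem bs x (Suc k) = bseq bs (Suc k) * grem bs x k - of_int \<lfloor>bseq bs (Suc k) * grem bs x k\<rfloor>"

definition gdigit :: "real list \<Rightarrow> real \<Rightarrow> nat \<Rightarrow> int" where
  "gdigit bs x k = \<lfloor>bseq bs k * grem bs x (k - 1)\<rfloor>"
  \<comment> \<open>the digit a_k, for k >= 1\<close>

text \<open>beta-integers: x >= 0 whose expansion a_1...a_{pk} . a_{pk+1}... has all digits after
  the radix point equal to zero (for some, equivalently every, admissible k).\<close>

definition beta_integers :: "real list \<Rightarrow> real set" where
  "beta_integers bs = {x. x \<ge> 0 \<and> (\<exists>k::nat. x / delta bs ^ k < 1 \<and>
      (\<forall>j > length bs * k. gdigit bs (x / delta bs ^ k) j = 0))}"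

definition pisot_unit :: "real \<Rightarrow> bool" where
  "pisot_unit d \<longleftrightarrow> d > 1 \<and> (\<exists>p :: int poly. lead_coeff p = 1 \<and> irreducible p \<and>
      poly (map_poly of_int p) d = 0 \<and> (coeff p 0 = 1 \<or> coeff p 0 = -1) \<and>
      (\<forall>z::complex. poly (map_poly of_int p) z = 0 \<and> z \<noteq> complex_of_real d \<longrightarrow> cmod z < 1))"

definition QQ :: "real \<Rightarrow> real set" where
  "QQ d = {x. \<exists>q :: rat poly. x = poly (map_poly of_rat q) d}"

definition field_embedding :: "real set \<Rightarrow> (real \<Rightarrow> complex) \<Rightarrow> bool" where
  "field_embedding K \<psi> \<longleftrightarrow> \<psi> 1 = 1 \<and>
     (\<forall>x\<in>K. \<forall>y\<in>K. \<psi> (x + y) = \<psi> x + \<psi> y \<and> \<psi> (x * y) = \<psi> x * \<psi> y)"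

end

theory Submission
  imports Defs "Berlekamp_Zassenhaus.Factorize_Rat_Poly"
begin

text \<open>Write \<open>z = \<delta>\<^sup>K x\<close> with \<open>x \<in> [0, 1)\<close> and let \<open>r\<^sub>m\<close> be the remainder of the greedy
  algorithm on \<open>x\<close> after \<open>m\<close> full periods. Then \<open>\<delta> r\<^sub>m = r\<^sub>m\<^sub>+\<^sub>1 + e\<^sub>m\<close>, where \<open>e\<^sub>m\<close> is a
  digit combination of the products \<open>\<beta>\<^sub>k\<^sub>+\<^sub>1 \<cdots> \<beta>\<^sub>p\<close>. Since \<open>\<delta>\<close> is a unit and the \<open>\<beta>\<^sub>i\<close> lie in
  \<open>\<rat>(\<delta>)\<close>, one fixed denominator \<open>D\<close> puts every \<open>D r\<^sub>m\<close> into \<open>\<int>[\<delta>]\<close>; and since the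
  conjugates \<open>a \<noteq> \<delta>\<close> satisfy \<open>|a| < 1\<close>, the conjugate \<open>\<psi>\<^sub>a(r\<^sub>m)\<close> stays within a bounded
  distance of \<open>a\<^sup>m \<psi>\<^sub>a(x) = \<psi>\<^sub>a(z) / a\<^sup>K\<^sup>-\<^sup>m\<close>. So if all nontrivial conjugates of \<open>z\<close> are
  small, the last \<open>M\<close> remainders \<open>r\<^sub>K\<^sub>-\<^sub>M, \<dots>, r\<^sub>K\<^sub>-\<^sub>1\<close> lie in a finite set \<open>F\<close> independent
  of \<open>z\<close>. They are pairwise distinct: a repetition would make the remainders periodic, and
  \<open>r\<^sub>K = 0\<close> would then force \<open>r\<^sub>K\<^sub>-\<^sub>1 = 0\<close>, i.e. \<open>z/\<delta>\<close> would be a \<open>\<beta>\<close>-integer. Choosing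
  \<open>M > |F|\<close> gives the contradiction.\<close>

section \<open>Greedy expansions in an alternate base\<close>

lemma alt_base_nonempty: "alt_base bs \<Longrightarrow> bs \<noteq> []"
  unfolding alt_base_def by simp

lemma bseq_in_set: "bs \<noteq> [] \<Longrightarrow> bseq bs k \<in> set bs"
  unfolding bseq_def by auto

lemma bseq_gt_1: "alt_base bs \<Longrightarrow> bseq bs k > 1"
  using bseq_in_set[of bs k] unfolding alt_base_def by auto

lemma bseq_nonneg: "alt_base bs \<Longrightarrow> 0 \<le> bseq bs k"
  using bseq_gt_1[of bs k] by simp

lemma bseq_add_period: "k \<ge> 1 \<Longrightarrow> bseq bs (m * length bs + k) = bseq bs k"
proof -
  assume "k \<ge> 1"
  then have "m * length bs + k - 1 = (k - 1) + m * length bs" by simp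
  then show ?thesis unfolding bseq_def by simp
qed

lemma grem_Suc_gdigit: "grem bs x (Suc k) = bseq bs (Suc k) * grem bs x k - of_int (gdigit bs x (Suc k))"
  by (simp add: gdigit_def)

lemma grem_bounds: "0 \<le> x \<Longrightarrow> x < 1 \<Longrightarrow> 0 \<le> grem bs x k \<and> grem bs x k < 1"
  by (cases k) (simp_all, linarith)

lemma grem_add_periods: "grem bs x (m * length bs + i) = grem bs (grem bs x (m * length bs)) i"
proof (induction i)
  case (Suc i)
  have "bseq bs (Suc (m * length bs + i)) = bseq bs (Suc i)"
    using bseq_add_period[of "Suc i" bs m] by simp
  then show ?case using Suc by simp
qed simp

lemma grem_eq_0_mono: "grem bs x k = 0 \<Longrightarrow> k \<le> n \<Longrightarrow> grem bs x n = 0"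
proof -
  assume "grem bs x k = 0" "k \<le> n"
  moreover have "grem bs x k = 0 \<Longrightarrow> grem bs x (k + j) = 0" for j
    by (induction j) auto
  ultimately show ?thesis by (metis le_add_diff_inverse)
qed

lemma gdigit_bounds:
  assumes "alt_base bs" "0 \<le> x" "x < 1"
  shows "0 \<le> gdigit bs x k \<and> of_int (gdigit bs x k) \<le> bseq bs k"
proof -
  have g: "0 \<le> grem bs x (k - 1)" "grem bs x (k - 1) < 1" using grem_bounds[OF assms(2,3)] by auto
  have b: "bseq bs k > 1" using bseq_gt_1[OF assms(1)] .
  have "0 \<le> bseq bs k * grem bs x (k - 1)" using g b by simp
  moreover have "bseq bs k * grem bs x (k - 1) \<le> bseq bs k" using g b by (simp add: mult_left_le)
  ultimately show ?thesis unfolding gdigit_def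
    by (meson floor_le_iff le_floor_iff of_int_floor_le order_trans zero_le_floor)
qed

text \<open>With no digits to spend, the remainder is multiplied by at least \<open>min (set bs) > 1\<close>
  in every step, so a nonzero remainder would leave \<open>[0, 1)\<close>.\<close>

lemma grem_eq_0_if_digits_vanish:
  assumes ab: "alt_base bs" and x: "0 \<le> x" "x < 1" and digits: "\<forall>j > N. gdigit bs x j = 0"
  shows "grem bs x N = 0"
proof (rule ccontr)
  assume "grem bs x N \<noteq> 0"
  then have pos: "grem bs x N > 0" using grem_bounds[OF x, of bs N] by auto
  define b0 where "b0 = Min (set bs)"
  have b0: "b0 > 1" using ab unfolding b0_def alt_base_def by auto
  have bge: "bseq bs k \<ge> b0" for k unfolding b0_def using bseq_in_set[OF alt_base_nonempty[OF ab]] by simp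
  have grow: "grem bs x (N + j) \<ge> b0 ^ j * grem bs x N" for j
  proof (induction j)
    case (Suc j)
    have "grem bs x (N + Suc j) = bseq bs (Suc (N + j)) * grem bs x (N + j)"
      using grem_Suc_gdigit[of bs x "N + j"] digits by simp
    also have "\<dots> \<ge> b0 * (b0 ^ j * grem bs x N)"
      using Suc bge[of "Suc (N + j)"] b0 pos by (intro mult_mono) auto
    finally show ?case by (simp add: mult.assoc)
  qed simp
  obtain j where "1 / grem bs x N < b0 ^ j" using real_arch_pow[OF b0] by blast
  then have "1 < b0 ^ j * grem bs x N" using pos by (simp add: field_simps)
  also have "\<dots> \<le> grem bs x (N + j)" using grow .
  finally show False using grem_bounds[OF x, of bs "N + j"] by simp
qed

lemma prod_bseq_mult_eq:
  "(\<Prod>k=1..i. bseq bs k) * x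
     = grem bs x i + (\<Sum>k=1..i. of_int (gdigit bs x k) * (\<Prod>l=Suc k..i. bseq bs l))"
proof (induction i)
  case (Suc i)
  have sum_Suc: "(\<Sum>k=1..Suc i. of_int (gdigit bs x k) * (\<Prod>l=Suc k..Suc i. bseq bs l))
      = bseq bs (Suc i) * (\<Sum>k=1..i. of_int (gdigit bs x k) * (\<Prod>l=Suc k..i. bseq bs l))
        + of_int (gdigit bs x (Suc i))"
    by (simp add: sum.nat_ivl_Suc' sum_distrib_left prod.nat_ivl_Suc' algebra_simps)
  have "(\<Prod>k=1..Suc i. bseq bs k) * x = bseq bs (Suc i) * ((\<Prod>k=1..i. bseq bs k) * x)"
    by (simp add: prod.nat_ivl_Suc')
  then show ?case unfolding Suc sum_Suc grem_Suc_gdigit by (simp add: algebra_simps)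
qed simp

lemma delta_eq_prod_bseq: "bs \<noteq> [] \<Longrightarrow> delta bs = (\<Prod>k=1..length bs. bseq bs k)"
proof -
  assume "bs \<noteq> []"
  have "(\<Prod>k=1..length bs. bseq bs k) = (\<Prod>k<length bs. bseq bs (Suc k))"
    by (simp add: prod.atLeast1_atMost_eq)
  also have "\<dots> = (\<Prod>k<length bs. bs ! k)"
    by (rule prod.cong) (auto simp: bseq_def)
  finally show ?thesis unfolding delta_def by (simp add: prod.list_conv_set_nth atLeast0LessThan)
qed

lemma prod_bseq_mono:
  assumes ab: "alt_base bs" and "i \<le> j"
  shows "(\<Prod>k=1..i. bseq bs k) \<le> (\<Prod>k=1..j. bseq bs k)"
  using \<open>i \<le> j\<close>
proof (induction j)
  case (Suc j)
  show ?case
  proof (cases "i = Suc j")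
    case False
    then have "(\<Prod>k=1..i. bseq bs k) \<le> (\<Prod>k=1..j. bseq bs k)" using Suc by simp
    also have "\<dots> \<le> bseq bs (Suc j) * (\<Prod>k=1..j. bseq bs k)"
    proof -
      have "0 \<le> (\<Prod>k=1..j. bseq bs k)" using bseq_nonneg[OF ab] by (intro prod_nonneg) simp
      then show ?thesis using bseq_gt_1[OF ab, of "Suc j"] by (simp add: mult_le_cancel_right1)
    qed
    finally show ?thesis by (simp add: prod.nat_ivl_Suc' mult.commute)
  qed simp
qed simp

lemma delta_gt_1: "alt_base bs \<Longrightarrow> delta bs > 1"
proof -
  assume ab: "alt_base bs"
  note ne = alt_base_nonempty[OF ab]
  have "(\<Prod>k=1..1. bseq bs k) \<le> (\<Prod>k=1..length bs. bseq bs k)"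
    using ne by (intro prod_bseq_mono[OF ab]) (simp add: Suc_leI)
  then show ?thesis using bseq_gt_1[OF ab, of 1] delta_eq_prod_bseq[OF ne] by simp
qed

definition integral_at :: "real list \<Rightarrow> real \<Rightarrow> nat \<Rightarrow> bool" where
  "integral_at bs z k \<longleftrightarrow> z / delta bs ^ k < 1 \<and>
     (\<forall>j > length bs * k. gdigit bs (z / delta bs ^ k) j = 0)"

lemma beta_integers_iff: "z \<in> beta_integers bs \<longleftrightarrow> 0 \<le> z \<and> (\<exists>k. integral_at bs z k)"
  unfolding beta_integers_def integral_at_def by auto

text \<open>Dividing by \<open>\<delta>\<close> shifts the expansion by one period: during the first period no digit
  is produced and the remainder grows back to the original number.\<close>

lemma integral_at_Suc:
  assumes ab: "alt_base bs" and z: "0 \<le> z" and int: "integral_at bs z k"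
  shows "integral_at bs z (Suc k)"
proof -
  define p where "p = length bs"
  define x where "x = z / delta bs ^ k"
  define y where "y = x / delta bs"
  note ne = alt_base_nonempty[OF ab]
  have d1: "delta bs > 1" using delta_gt_1[OF ab] .
  have x: "0 \<le> x" "x < 1" using z d1 int unfolding x_def integral_at_def by auto
  have y: "z / delta bs ^ Suc k = y" unfolding x_def y_def by simp
  have y0: "0 \<le> y" unfolding y_def using x d1 by simp
  have y_prod: "x = y * (\<Prod>k=1..p. bseq bs k)"
    unfolding y_def p_def delta_eq_prod_bseq[OF ne, symmetric] using d1 by simp
  have init: "grem bs y i = y * (\<Prod>k=1..i. bseq bs k)" if "i \<le> p" for i
    using that
  proof (induction i)
    case (Suc i)
    define t where "t = y * (\<Prod>k=1..Suc i. bseq bs k)"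
    have "0 \<le> t" unfolding t_def using y0 bseq_nonneg[OF ab]
      by (intro mult_nonneg_nonneg prod_nonneg) auto
    moreover have "t \<le> x" unfolding t_def y_prod
      using prod_bseq_mono[OF ab Suc.prems] y0 by (rule mult_left_mono)
    ultimately have "\<lfloor>t\<rfloor> = 0" using x by (simp add: floor_eq_iff)
    moreover have "bseq bs (Suc i) * grem bs y i = t"
      using Suc by (simp add: t_def prod.nat_ivl_Suc' algebra_simps)
    ultimately have "grem bs y (Suc i) = t" by simp
    then show ?case unfolding t_def .
  qed simp
  have "grem bs y p = x" using init[of p] y_prod by simp
  have "gdigit bs y j = 0" if j: "length bs * Suc k < j" for j
  proof -
    define j' where "j' = j - p"
    have j': "j = 1 * p + j'" "j' \<ge> 1" "j' > length bs * k" using j unfolding j'_def p_def by auto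
    have "j - 1 = 1 * p + (j' - 1)" using j' by simp
    then have "grem bs y (j - 1) = grem bs x (j' - 1)"
      using grem_add_periods[of bs y 1 "j' - 1"] \<open>grem bs y p = x\<close> unfolding p_def by simp
    moreover have "bseq bs j = bseq bs j'" using j' bseq_add_period[of j' bs 1] unfolding p_def by simp
    ultimately have "gdigit bs y j = gdigit bs x j'" unfolding gdigit_def by simp
    then show ?thesis using int j' unfolding integral_at_def x_def by simp
  qed
  moreover have "y < 1" using x d1 unfolding y_def by (simp add: divide_less_eq)
  ultimately show ?thesis unfolding integral_at_def y by simp
qed

lemma integral_at_mono:
  assumes "alt_base bs" "0 \<le> z" "integral_at bs z k" "k \<le> n"
  shows "integral_at bs z n"
  using \<open>k \<le> n\<close> by (induction n rule: dec_induct) (simp_all add: assms(3) integral_at_Suc[OF assms(1,2)])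

lemma integral_at_divide_delta:
  assumes "1 \<le> K" "z / delta bs ^ K < 1"
    and "grem bs (z / delta bs ^ K) ((K - 1) * length bs) = 0"
  shows "integral_at bs (z / delta bs) (K - 1)"
proof -
  obtain K' where K': "K = Suc K'" using \<open>1 \<le> K\<close> by (cases K) auto
  have K: "z / delta bs / delta bs ^ (K - 1) = z / delta bs ^ K"
    unfolding K' by (simp add: divide_divide_eq_left mult.commute)
  have "gdigit bs (z / delta bs ^ K) j = 0" if "length bs * (K - 1) < j" for j
  proof -
    have "(K - 1) * length bs \<le> j - 1" using that by (simp add: mult.commute)
    then show ?thesis using grem_eq_0_mono[OF assms(3)] unfolding gdigit_def by simp
  qed
  then show ?thesis unfolding integral_at_def K using assms(2) by simp
qed

lemma beta_integer_non_multiple_remainders: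
  assumes ab: "alt_base bs" and z: "z \<in> beta_integers bs - (\<lambda>w. delta bs * w) ` beta_integers bs"
  obtains k0 where "\<And>K. k0 \<le> K \<Longrightarrow>
    0 \<le> z / delta bs ^ K \<and> z / delta bs ^ K < 1 \<and>
    grem bs (z / delta bs ^ K) (K * length bs) = 0 \<and>
    grem bs (z / delta bs ^ K) ((K - 1) * length bs) \<noteq> 0"
proof -
  obtain k where z0: "0 \<le> z" and k: "integral_at bs z k" using z beta_integers_iff by blast
  show ?thesis
  proof (rule that[of "Suc k"])
    fix K assume "Suc k \<le> K"
    then have K: "integral_at bs z K" "1 \<le> K" using integral_at_mono[OF ab z0 k] by auto
    have d1: "delta bs > 1" using delta_gt_1[OF ab] .
    have x: "0 \<le> z / delta bs ^ K" "z / delta bs ^ K < 1"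
      using K z0 d1 unfolding integral_at_def by auto
    have "grem bs (z / delta bs ^ K) (K * length bs) = 0"
      using grem_eq_0_if_digits_vanish[OF ab x] K unfolding integral_at_def by (simp add: mult.commute)
    moreover have "grem bs (z / delta bs ^ K) ((K - 1) * length bs) \<noteq> 0"
    proof
      assume "grem bs (z / delta bs ^ K) ((K - 1) * length bs) = 0"
      then have "z / delta bs \<in> beta_integers bs"
        using integral_at_divide_delta[OF K(2) x(2)] z0 d1 beta_integers_iff by auto
      moreover have "z = delta bs * (z / delta bs)" using d1 by simp
      ultimately show False using z by blast
    qed
    ultimately show "0 \<le> z / delta bs ^ K \<and> z / delta bs ^ K < 1 \<and>
      grem bs (z / delta bs ^ K) (K * length bs) = 0 \<and>
      grem bs (z / delta bs ^ K) ((K - 1) * length bs) \<noteq> 0" using x by simp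
  qed
qed

definition tail_prod :: "real list \<Rightarrow> nat \<Rightarrow> real" where
  "tail_prod bs k = (\<Prod>l=Suc k..length bs. bseq bs l)"

definition block_value :: "real list \<Rightarrow> real \<Rightarrow> real" where
  "block_value bs y = (\<Sum>k=1..length bs. of_int (gdigit bs y k) * tail_prod bs k)"

lemma delta_mult_block_remainder:
  assumes "bs \<noteq> []"
  shows "delta bs * grem bs x (m * length bs)
    = grem bs x (Suc m * length bs) + block_value bs (grem bs x (m * length bs))"
  using prod_bseq_mult_eq[of bs "length bs" "grem bs x (m * length bs)"]
    grem_add_periods[of bs x m "length bs"]
  unfolding delta_eq_prod_bseq[OF assms] block_value_def tail_prod_def
  by (simp add: add.commute)

text \<open>A repetition among the block remainders makes them periodic from then on, which is
  incompatible with the expansion terminating exactly in block \<open>K\<close>.\<close>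

lemma inj_on_block_remainders:
  assumes stop: "grem bs x (K * length bs) = 0" and last: "grem bs x ((K - 1) * length bs) \<noteq> 0"
  shows "inj_on (\<lambda>m. grem bs x (m * length bs)) {..<K}"
proof -
  define r where "r = (\<lambda>m. grem bs x (m * length bs))"
  have no_repeat: False if ab: "a < b" "b < K" "r a = r b" for a b
  proof -
    define d where "d = b - a"
    have b: "b = a + d" "1 \<le> d" using ab(1) unfolding d_def by auto
    have shift: "grem bs x (b * length bs + i) = grem bs x (a * length bs + i)" for i
      using grem_add_periods[of bs x b i] grem_add_periods[of bs x a i] ab(3)
      unfolding r_def by simp
    have periodic: "grem bs x ((a + c * d) * length bs) = r a" for c
    proof (induction c)
      case (Suc c)
      have "(a + Suc c * d) * length bs = b * length bs + c * d * length bs"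
        unfolding b by (simp add: algebra_simps)
      then have "grem bs x ((a + Suc c * d) * length bs) = grem bs x (a * length bs + c * d * length bs)"
        unfolding shift[symmetric] by (rule arg_cong)
      also have "a * length bs + c * d * length bs = (a + c * d) * length bs"
        by (simp add: add_mult_distrib)
      finally show ?case using Suc by simp
    qed (simp add: r_def)
    have "K * 1 \<le> K * d" using b(2) by (intro mult_le_mono2)
    then have "K * length bs \<le> (a + K * d) * length bs" by (intro mult_le_mono1) linarith
    then have "r a = 0" using periodic[of K] grem_eq_0_mono[OF stop] by simp
    moreover have "a * length bs \<le> (K - 1) * length bs" using ab by (intro mult_le_mono1) simp
    ultimately show False using grem_eq_0_mono[of bs x "a * length bs"] last unfolding r_def by blast
  qed
  then have "inj_on r {..<K}"
  proof (intro inj_onI)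
    fix a b assume "a \<in> {..<K}" "b \<in> {..<K}" "r a = r b"
    then show "a = b" using no_repeat[of a b] no_repeat[of b a] by (cases a b rule: linorder_cases) auto
  qed
  then show ?thesis unfolding r_def .
qed

section \<open>The field \<open>QQ d\<close> and the ring \<open>ZZ d\<close>\<close>

interpretation of_rat_poly_hom: map_poly_comm_ring_hom "of_rat :: rat \<Rightarrow> 'a :: field_char_0" ..

lemma QQ_of_rat: "of_rat c \<in> QQ d"
  unfolding QQ_def by (rule CollectI, rule exI[of _ "[:c:]"]) (simp add: hom_distribs)

lemma QQ_of_int: "of_int c \<in> QQ d"
  using QQ_of_rat[of "of_int c" d] by simp

lemma QQ_self: "d \<in> QQ d"
  unfolding QQ_def by (rule CollectI, rule exI[of _ "[:0, 1:]"]) (simp add: hom_distribs)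

lemma QQ_add: assumes "x \<in> QQ d" "y \<in> QQ d" shows "x + y \<in> QQ d"
proof -
  obtain q r where "x = poly (map_poly of_rat q) d" "y = poly (map_poly of_rat r) d"
    using assms unfolding QQ_def by auto
  then have "x + y = poly (map_poly of_rat (q + r)) d" by (simp add: hom_distribs)
  then show ?thesis unfolding QQ_def by blast
qed

lemma QQ_diff: assumes "x \<in> QQ d" "y \<in> QQ d" shows "x - y \<in> QQ d"
proof -
  obtain q r where "x = poly (map_poly of_rat q) d" "y = poly (map_poly of_rat r) d"
    using assms unfolding QQ_def by auto
  then have "x - y = poly (map_poly of_rat (q - r)) d" by (simp add: hom_distribs)
  then show ?thesis unfolding QQ_def by blast
qed

lemma QQ_mult: assumes "x \<in> QQ d" "y \<in> QQ d" shows "x * y \<in> QQ d"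
proof -
  obtain q r where "x = poly (map_poly of_rat q) d" "y = poly (map_poly of_rat r) d"
    using assms unfolding QQ_def by auto
  then have "x * y = poly (map_poly of_rat (q * r)) d" by (simp add: hom_distribs)
  then show ?thesis unfolding QQ_def by blast
qed

lemma QQ_sum: "(\<And>a. a \<in> A \<Longrightarrow> f a \<in> QQ d) \<Longrightarrow> sum f A \<in> QQ d"
  by (induction A rule: infinite_finite_induct) (auto intro: QQ_add simp: QQ_of_int[of 0, simplified])

lemma QQ_prod: "(\<And>a. a \<in> A \<Longrightarrow> f a \<in> QQ d) \<Longrightarrow> prod f A \<in> QQ d"
  by (induction A rule: infinite_finite_induct) (auto intro: QQ_mult simp: QQ_of_int[of 1, simplified])

lemma QQ_power: "x \<in> QQ d \<Longrightarrow> x ^ n \<in> QQ d"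
  using QQ_prod[of "{..<n}" "\<lambda>_. x" d] by simp

definition ZZ :: "real \<Rightarrow> real set" where
  "ZZ d = {y. \<exists>s :: int poly. y = poly (of_int_poly s) d}"

lemma ZZ_of_int: "of_int c \<in> ZZ d"
  unfolding ZZ_def by (rule CollectI, rule exI[of _ "[:c:]"]) (simp add: hom_distribs)

lemma ZZ_add: assumes "x \<in> ZZ d" "y \<in> ZZ d" shows "x + y \<in> ZZ d"
proof -
  obtain q r where "x = poly (of_int_poly q) d" "y = poly (of_int_poly r) d"
    using assms unfolding ZZ_def by auto
  then have "x + y = poly (of_int_poly (q + r)) d" by (simp add: hom_distribs)
  then show ?thesis unfolding ZZ_def by blast
qed

lemma ZZ_mult: assumes "x \<in> ZZ d" "y \<in> ZZ d" shows "x * y \<in> ZZ d"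
proof -
  obtain q r where "x = poly (of_int_poly q) d" "y = poly (of_int_poly r) d"
    using assms unfolding ZZ_def by auto
  then have "x * y = poly (of_int_poly (q * r)) d" by (simp add: hom_distribs)
  then show ?thesis unfolding ZZ_def by blast
qed

lemma ZZ_sum: "(\<And>a. a \<in> A \<Longrightarrow> f a \<in> ZZ d) \<Longrightarrow> sum f A \<in> ZZ d"
  by (induction A rule: infinite_finite_induct) (auto intro: ZZ_add simp: ZZ_of_int[of 0, simplified])

lemma ZZ_subset_QQ: "ZZ d \<subseteq> QQ d"
proof
  fix x assume "x \<in> ZZ d"
  then obtain q where "x = poly (of_int_poly q) d" unfolding ZZ_def by auto
  then have "x = poly (map_poly of_rat (of_int_poly q)) d" by (simp add: map_poly_map_poly o_def)
  then show "x \<in> QQ d" unfolding QQ_def by blast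
qed

lemma QQ_if_int_multiple_ZZ: "of_int D * y \<in> ZZ d \<Longrightarrow> D \<noteq> 0 \<Longrightarrow> y \<in> QQ d"
proof -
  assume "of_int D * y \<in> ZZ d" "D \<noteq> 0"
  moreover have "y = of_rat (inverse (of_int D)) * (of_int D * y)"
    using \<open>D \<noteq> 0\<close> by (simp add: of_rat_inverse)
  ultimately show ?thesis using QQ_mult[OF QQ_of_rat] ZZ_subset_QQ by (metis subsetD)
qed

lemma QQ_denominator: assumes "x \<in> QQ d" shows "\<exists>D::int. D > 0 \<and> of_int D * x \<in> ZZ d"
proof -
  obtain q where q: "x = poly (map_poly of_rat q) d" using assms unfolding QQ_def by auto
  obtain D s where r: "rat_to_int_poly q = (D, s)" by (cases "rat_to_int_poly q") auto
  from rat_to_int_poly[OF r]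
  have qs: "q = Polynomial.smult (inverse (rat_of_int D)) (of_int_poly s)" and D: "D > 0" by auto
  have "of_int D * x = poly (of_int_poly s) d"
    unfolding q qs using D by (simp add: hom_distribs map_poly_map_poly o_def)
  then show ?thesis using D unfolding ZZ_def by auto
qed

lemma QQ_common_denominator:
  assumes "finite A" "A \<subseteq> QQ d"
  shows "\<exists>D::int. D > 0 \<and> (\<forall>a\<in>A. of_int D * a \<in> ZZ d)"
  using assms
proof (induction A rule: finite_induct)
  case empty then show ?case by (auto intro: exI[of _ 1])
next
  case (insert a A)
  then obtain D where D: "D > 0" "\<forall>b\<in>A. of_int D * b \<in> ZZ d" by auto
  obtain E where E: "E > 0" "of_int E * a \<in> ZZ d" using QQ_denominator[of a d] insert.prems by auto
  have "of_int (D * E) * b \<in> ZZ d" if "b \<in> insert a A" for b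
  proof (cases "b = a")
    case True
    then show ?thesis using ZZ_mult[OF ZZ_of_int[of D] E(2)] by (simp add: ac_simps)
  next
    case False
    then show ?thesis using that ZZ_mult[OF ZZ_of_int[of E] D(2)[rule_format, of b]] by (simp add: ac_simps)
  qed
  then show ?case using D E by (intro exI[of _ "D * E"]) simp
qed

section \<open>Lagrange interpolation and a drift estimate\<close>

definition lagrange_basis :: "'a::field set \<Rightarrow> 'a \<Rightarrow> 'a poly" where
  "lagrange_basis R a = Polynomial.smult (inverse (\<Prod>b\<in>R-{a}. a - b)) (\<Prod>b\<in>R-{a}. [:-b, 1:])"

lemma poly_lagrange_basis:
  assumes "finite R" "a \<in> R" "c \<in> R"
  shows "poly (lagrange_basis R a) c = (if c = a then 1 else 0)"
proof -
  have "poly (lagrange_basis R a) c = inverse (\<Prod>b\<in>R-{a}. a - b) * (\<Prod>b\<in>R-{a}. c - b)"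
    unfolding lagrange_basis_def by (simp add: poly_prod)
  moreover have "(\<Prod>b\<in>R-{a}. a - b) \<noteq> 0" using assms(1) by (subst prod_zero_iff) auto
  moreover have "(\<Prod>b\<in>R-{a}. c - b) = 0" if "c \<noteq> a" using assms that by (subst prod_zero_iff) auto
  ultimately show ?thesis by auto
qed

lemma degree_lagrange_basis:
  assumes "finite R" "a \<in> R"
  shows "degree (lagrange_basis R a) \<le> card R - 1"
proof -
  have "degree (lagrange_basis R a) \<le> degree (\<Prod>b\<in>R-{a}. [:-b, 1:])"
    unfolding lagrange_basis_def by (rule degree_smult_le)
  also have "\<dots> \<le> (\<Sum>b\<in>R-{a}. degree [:-b, 1:])"
    using degree_prod_sum_le[of "R - {a}" "\<lambda>b. [:-b, 1:]"] assms(1) by (simp add: o_def)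
  also have "\<dots> = card R - 1" using assms by simp
  finally show ?thesis .
qed

lemma lagrange_interpolation:
  assumes R: "finite R" and f: "degree f < card R"
  shows "f = (\<Sum>a\<in>R. Polynomial.smult (poly f a) (lagrange_basis R a))"
    (is "f = ?L")
proof (rule ccontr)
  assume "f \<noteq> ?L"
  then have nz: "f - ?L \<noteq> 0" by simp
  have "degree ?L \<le> card R - 1"
    using R degree_lagrange_basis[OF R]
    by (intro degree_sum_le) (auto intro: order.trans[OF degree_smult_le])
  moreover have "degree f \<le> card R - 1" using f by simp
  ultimately have "degree (f - ?L) \<le> card R - 1" by (meson degree_diff_le)
  then have deg: "degree (f - ?L) < card R" using f by linarith
  have "poly (f - ?L) c = 0" if c: "c \<in> R" for c
  proof -
    have "poly ?L c = (\<Sum>a\<in>R. if c = a then poly f a else 0)"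
      by (simp add: poly_sum poly_lagrange_basis[OF R _ c] if_distrib cong: if_cong)
    also have "\<dots> = poly f c" using R c by (simp add: sum.delta)
    finally show ?thesis by simp
  qed
  then have "R \<subseteq> {x. poly (f - ?L) x = 0}" by blast
  then have "card R \<le> card {x. poly (f - ?L) x = 0}" using poly_roots_finite[OF nz] by (rule card_mono[rotated])
  also have "\<dots> \<le> degree (f - ?L)" using card_poly_roots_bound[OF nz] .
  finally show False using deg by simp
qed

lemma coeff_bound_by_values:
  fixes R :: "'a::real_normed_field set"
  assumes R: "finite R"
  shows "\<exists>K\<ge>0. \<forall>f B k. degree f < card R \<longrightarrow> (\<forall>a\<in>R. norm (poly f a) \<le> B) \<longrightarrow>
           norm (coeff f k) \<le> K * B"
proof -
  define S where "S a = (\<Sum>j<card R. norm (coeff (lagrange_basis R a) j))" for a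
  have coeff_le_S: "norm (coeff (lagrange_basis R a) k) \<le> S a" if "a \<in> R" for a k
  proof (cases "k < card R")
    case False
    then have "coeff (lagrange_basis R a) k = 0"
      using degree_lagrange_basis[OF R that] card_gt_0_iff[of R] R that
      by (intro coeff_eq_0) fastforce
    then show ?thesis unfolding S_def by (simp add: sum_nonneg)
  qed (unfold S_def, intro member_le_sum, auto)
  have "norm (coeff f k) \<le> sum S R * B"
    if f: "degree f < card R" and bound: "\<forall>a\<in>R. norm (poly f a) \<le> B" for f B k
  proof -
    have "R \<noteq> {}" using f by auto
    then have B: "B \<ge> 0" using bound by (meson all_not_in_conv norm_ge_zero order.trans)
    have "coeff f k = (\<Sum>a\<in>R. poly f a * coeff (lagrange_basis R a) k)"
      by (subst lagrange_interpolation[OF R f]) (simp add: coeff_sum)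
    then have "norm (coeff f k) \<le> (\<Sum>a\<in>R. norm (poly f a) * norm (coeff (lagrange_basis R a) k))"
      by (metis (no_types, lifting) norm_mult norm_sum sum.cong)
    also have "\<dots> \<le> (\<Sum>a\<in>R. B * S a)"
      using bound B coeff_le_S by (intro sum_mono mult_mono) auto
    finally show ?thesis by (simp add: sum_distrib_left mult.commute)
  qed
  moreover have "sum S R \<ge> 0" unfolding S_def by (intro sum_nonneg) auto
  ultimately show ?thesis by blast
qed

lemma finite_bounded_int_polys: "finite {s::int poly. degree s < n \<and> (\<forall>k. \<bar>coeff s k\<bar> \<le> N)}"
proof (rule finite_subset)
  show "{s::int poly. degree s < n \<and> (\<forall>k. \<bar>coeff s k\<bar> \<le> N)}
    \<subseteq> Poly ` {xs. set xs \<subseteq> {-N..N} \<and> length xs \<le> n}"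
  proof
    fix s :: "int poly" assume s: "s \<in> {s. degree s < n \<and> (\<forall>k. \<bar>coeff s k\<bar> \<le> N)}"
    have "set (coeffs s) \<subseteq> {-N..N}"
    proof
      fix c assume "c \<in> set (coeffs s)"
      then obtain i where "c = coeff s i" by (auto simp: coeffs_def split: if_splits)
      moreover have "\<bar>coeff s i\<bar> \<le> N" using s by simp
      ultimately show "c \<in> {-N..N}" by (simp add: abs_le_iff)
    qed
    moreover have "length (coeffs s) \<le> n" using s by (cases "s = 0") (auto simp: length_coeffs_degree)
    ultimately show "s \<in> Poly ` {xs. set xs \<subseteq> {-N..N} \<and> length xs \<le> n}"
      by (intro image_eqI[of _ _ "coeffs s"]) auto
  qed
  show "finite (Poly ` {xs. set xs \<subseteq> {-N..N} \<and> length xs \<le> n})"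
    by (intro finite_imageI finite_lists_length_le) simp
qed

lemma norm_affine_recurrence_drift:
  fixes u v :: "nat \<Rightarrow> 'a::real_normed_field"
  assumes rec: "\<And>m. u (Suc m) = a * u m + v m" and v: "\<And>m. norm (v m) \<le> A"
    and a: "norm a < 1"
  shows "norm (u n - a ^ n * u 0) \<le> A / (1 - norm a)"
proof (induction n)
  case 0
  have "0 \<le> A" using norm_ge_zero v[of 0] by (rule order.trans)
  then show ?case using a by simp
next
  case (Suc n)
  have "u (Suc n) - a ^ Suc n * u 0 = a * (u n - a ^ n * u 0) + v n"
    by (simp add: rec algebra_simps)
  then have "norm (u (Suc n) - a ^ Suc n * u 0) \<le> norm a * norm (u n - a ^ n * u 0) + norm (v n)"
    using norm_triangle_ineq[of "a * (u n - a ^ n * u 0)" "v n"] by (simp add: norm_mult)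
  also have "\<dots> \<le> norm a * (A / (1 - norm a)) + A"
    using Suc v[of n] by (intro add_mono mult_left_mono) auto
  also have "\<dots> = A / (1 - norm a)" using a by (simp add: field_simps)
  finally show ?case .
qed

section \<open>Conjugate embeddings of \<open>\<rat>(dl)\<close>\<close>

locale algebraic_unit =
  fixes P :: "int poly" and dl :: real
  assumes irreducible_P: "irreducible P" and monic_P: "lead_coeff P = 1"
    and root_dl: "poly (of_int_poly P) dl = 0" and unit_P: "coeff P 0 = 1 \<or> coeff P 0 = -1"
    and dl_gt_1: "dl > 1"
begin

definition roots :: "complex set" where
  "roots = {x. poly (of_int_poly P) x = 0}"

definition other_roots :: "complex set" where
  "other_roots = roots - {complex_of_real dl}"

text \<open>The embedding of \<open>\<rat>(dl)\<close> sending \<open>dl\<close> to \<open>a\<close>; it is well defined on \<open>QQ dl\<close> because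
  every rational polynomial vanishing at \<open>dl\<close> is a multiple of \<open>P\<close>.\<close>

definition emb :: "complex \<Rightarrow> real \<Rightarrow> complex" where
  "emb a x = poly (map_poly of_rat (SOME q. x = poly (map_poly of_rat q) dl)) a"

lemma P_nonzero: "P \<noteq> 0"
  using monic_P by auto

lemma irreducible_rat_P: "irreducible (of_int_poly P :: rat poly)"
proof -
  have "primitive P"
  proof (rule primitiveI)
    fix x assume "\<And>y. y \<in> set (coeffs P) \<Longrightarrow> x dvd y"
    then have "x dvd lead_coeff P" using coeff_in_coeffs[OF P_nonzero, of "degree P"] by simp
    then show "x dvd 1" using monic_P by simp
  qed
  then have "irreducible\<^sub>d P" using irreducible_primitive_connect[of P] irreducible_P by simp
  then have "irreducible\<^sub>d (of_int_poly P :: rat poly)" by (rule irreducible\<^sub>d_int_rat)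
  then show ?thesis using irreducible_connect_field by blast
qed

lemma of_rat_of_int_poly: "map_poly (of_rat :: rat \<Rightarrow> 'a::field_char_0) (of_int_poly P) = of_int_poly P"
  by (simp add: map_poly_map_poly o_def)

lemma dvd_if_root:
  assumes q: "poly (map_poly of_rat q) dl = (0::real)"
  shows "(of_int_poly P :: rat poly) dvd q"
proof -
  let ?P = "of_int_poly P :: rat poly"
  obtain x y where xy: "bezout_coefficients ?P q = (x, y)" by (cases "bezout_coefficients ?P q") auto
  have bezout: "x * ?P + y * q = gcd ?P q" using bezout_coefficients[OF xy] .
  obtain h where h: "?P = gcd ?P q * h" by (meson dvd_def gcd_dvd1)
  from irreducibleD[OF irreducible_rat_P h] show ?thesis
  proof
    assume "gcd ?P q dvd 1"
    then obtain c where c: "gcd ?P q = [:c:]" "c dvd 1" using is_unit_poly_iff by blast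
    have "poly (map_poly of_rat (x * ?P + y * q)) dl = (0::real)"
      using q root_dl by (simp add: of_rat_poly_hom.hom_mult hom_distribs of_rat_of_int_poly)
    then have "(of_rat c :: real) = 0" unfolding bezout c by (simp add: hom_distribs)
    then show ?thesis using c(2) by simp
  next
    assume "h dvd 1"
    then obtain h' where "1 = h * h'" by (auto simp: dvd_def)
    then have "gcd ?P q = ?P * h'" using h by (metis mult.assoc mult.right_neutral)
    then have "?P dvd gcd ?P q" by simp
    then show ?thesis using gcd_dvd2 dvd_trans by blast
  qed
qed

lemma emb_poly:
  assumes a: "a \<in> roots"
  shows "emb a (poly (map_poly of_rat q) dl) = poly (map_poly of_rat q) a"
proof -
  define q' where "q' = (SOME q'. poly (map_poly of_rat q) dl = poly (map_poly of_rat q') dl)"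
  have "poly (map_poly of_rat q) dl = poly (map_poly of_rat q') (dl::real)"
    unfolding q'_def by (rule someI[of _ q]) simp
  then have "poly (map_poly of_rat (q' - q)) dl = (0::real)" by (simp add: hom_distribs)
  then obtain s where s: "q' - q = of_int_poly P * s" using dvd_if_root by (auto simp: dvd_def)
  have "poly (of_int_poly P) a = 0" using a unfolding roots_def by simp
  then have "poly (map_poly of_rat (q' - q)) a = 0"
    unfolding s by (simp add: of_rat_poly_hom.hom_mult of_rat_of_int_poly)
  then show ?thesis unfolding emb_def q'_def[symmetric] by (simp add: hom_distribs)
qed

lemma emb_int_poly: "a \<in> roots \<Longrightarrow> emb a (poly (of_int_poly s) dl) = poly (of_int_poly s) a"
  using emb_poly[of a "of_int_poly s"] by (simp add: map_poly_map_poly o_def)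

lemma emb_add:
  assumes "a \<in> roots" "x \<in> QQ dl" "y \<in> QQ dl"
  shows "emb a (x + y) = emb a x + emb a y"
proof -
  obtain q r where "x = poly (map_poly of_rat q) dl" "y = poly (map_poly of_rat r) dl"
    using assms unfolding QQ_def by auto
  then show ?thesis using emb_poly[OF assms(1), of "q + r"] emb_poly[OF assms(1), of q]
      emb_poly[OF assms(1), of r]
    by (simp add: hom_distribs)
qed

lemma emb_diff:
  assumes "a \<in> roots" "x \<in> QQ dl" "y \<in> QQ dl"
  shows "emb a (x - y) = emb a x - emb a y"
proof -
  obtain q r where "x = poly (map_poly of_rat q) dl" "y = poly (map_poly of_rat r) dl"
    using assms unfolding QQ_def by auto
  then show ?thesis using emb_poly[OF assms(1), of "q - r"] emb_poly[OF assms(1), of q]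
      emb_poly[OF assms(1), of r]
    by (simp add: hom_distribs)
qed

lemma emb_mult:
  assumes "a \<in> roots" "x \<in> QQ dl" "y \<in> QQ dl"
  shows "emb a (x * y) = emb a x * emb a y"
proof -
  obtain q r where "x = poly (map_poly of_rat q) dl" "y = poly (map_poly of_rat r) dl"
    using assms unfolding QQ_def by auto
  then show ?thesis using emb_poly[OF assms(1), of "q * r"] emb_poly[OF assms(1), of q]
      emb_poly[OF assms(1), of r]
    by (simp add: hom_distribs of_rat_poly_hom.hom_mult)
qed

lemma emb_of_int: "a \<in> roots \<Longrightarrow> emb a (of_int c) = of_int c"
  using emb_poly[of a "[:of_int c:]"] by (simp add: hom_distribs)

lemma emb_dl: "a \<in> roots \<Longrightarrow> emb a dl = a"
  using emb_poly[of a "[:0, 1:]"] by (simp add: hom_distribs)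

lemma field_embedding_emb: "a \<in> roots \<Longrightarrow> field_embedding (QQ dl) (emb a)"
  unfolding field_embedding_def using emb_add emb_mult emb_of_int[of a 1] by simp

lemma emb_sum:
  assumes "a \<in> roots" "\<And>i. i \<in> A \<Longrightarrow> f i \<in> QQ dl"
  shows "emb a (sum f A) = (\<Sum>i\<in>A. emb a (f i))"
  using assms(2)
  by (induction A rule: infinite_finite_induct)
    (simp_all add: emb_of_int[OF assms(1), of 0, simplified] emb_add[OF assms(1)] QQ_sum)

lemma emb_power: "a \<in> roots \<Longrightarrow> x \<in> QQ dl \<Longrightarrow> emb a (x ^ n) = emb a x ^ n"
  by (induction n) (simp_all add: emb_of_int[of a 1, simplified] emb_mult QQ_power)

lemma inverse_dl_ZZ: "inverse dl \<in> ZZ dl"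
proof -
  obtain c Q where PQ: "P = pCons c Q" by (cases P) auto
  have c: "c = coeff P 0" using PQ by simp
  have "0 = of_int c + dl * poly (of_int_poly Q) dl" using root_dl unfolding PQ by (simp add: hom_distribs)
  then have "inverse dl = poly (of_int_poly (Polynomial.smult (- c) Q)) dl"
    using unit_P dl_gt_1 unfolding c[symmetric] by (auto simp: hom_distribs field_simps)
  then show ?thesis unfolding ZZ_def by blast
qed

lemma roots_nonzero: "a \<in> roots \<Longrightarrow> a \<noteq> 0"
  using unit_P by (auto simp: roots_def poly_0_coeff_0)

lemma finite_roots: "finite roots"
  unfolding roots_def using P_nonzero by (intro poly_roots_finite) simp

lemma card_roots: "card roots = degree P"
proof -
  have "square_free (of_int_poly P :: rat poly)"
    using irreducible_rat_P irreducible_connect_field irreducible\<^sub>d_square_free by blast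
  then have "square_free (map_poly (of_rat :: rat \<Rightarrow> complex) (of_int_poly P))"
    using field_hom_0'.square_free_map_poly[OF field_hom_0'.intro[OF of_rat_hom.field_hom_axioms]]
    by blast
  then have "rsquarefree (of_int_poly P :: complex poly)"
    by (simp add: of_rat_of_int_poly square_free_rsquarefree)
  then show ?thesis unfolding roots_def using rsquarefree_card_degree P_nonzero by auto
qed

lemma degree_P_ge_2: "degree P \<ge> 2"
proof (rule ccontr)
  assume "\<not> degree P \<ge> 2"
  then consider "degree P = 0" | "degree P = 1" by linarith
  then show False
  proof cases
    case 1
    then have "P = 1" using monic_P by (metis degree_0_id one_pCons)
    then show False using root_dl by simp
  next
    case 2
    then have "0 = of_int (coeff P 0) + dl" using root_dl monic_P by (simp add: poly_altdef)
    then show False using unit_P dl_gt_1 by auto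
  qed
qed

lemma other_roots_nonempty: "other_roots \<noteq> {}"
proof
  assume "other_roots = {}"
  then have "card roots \<le> card {complex_of_real dl}"
    unfolding other_roots_def by (intro card_mono) auto
  then show False using card_roots degree_P_ge_2 by simp
qed

text \<open>Numbers with a fixed denominator and bounded conjugates form a finite set: reducing
  the numerator modulo \<open>P\<close> and interpolating on the roots bounds its integer coefficients.\<close>

lemma finite_bounded_conjugates:
  assumes D: "D > 0"
  shows "finite {y. 0 \<le> y \<and> y < 1 \<and> of_int D * y \<in> ZZ dl \<and> (\<forall>a\<in>other_roots. cmod (emb a y) \<le> B)}"
    (is "finite ?F")
proof -
  obtain K where K: "\<And>f B k. degree f < card roots \<Longrightarrow> (\<forall>a\<in>roots. cmod (poly f a) \<le> B) \<Longrightarrow>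
      cmod (coeff f k) \<le> K * B"
    using coeff_bound_by_values[OF finite_roots] by blast
  define B' where "B' = of_int D * max B 1"
  define S where "S = {s::int poly. degree s < degree P \<and> (\<forall>k. \<bar>coeff s k\<bar> \<le> \<lfloor>K * B'\<rfloor>)}"
  have "?F \<subseteq> (\<lambda>s. poly (of_int_poly s) dl / of_int D) ` S"
  proof
    fix y assume "y \<in> ?F"
    then have y: "0 \<le> y" "y < 1" "of_int D * y \<in> ZZ dl" and yB: "\<forall>a\<in>other_roots. cmod (emb a y) \<le> B"
      by auto
    obtain s where s: "of_int D * y = poly (of_int_poly s) dl" using y(3) unfolding ZZ_def by auto
    obtain q r where qr: "pseudo_divmod s P = (q, r)" by (cases "pseudo_divmod s P") auto
    have srq: "s = P * q + r" using pseudo_divmod(1)[OF P_nonzero qr] monic_P by simp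
    have deg_r: "degree r < degree P" using pseudo_divmod(2)[OF P_nonzero qr] degree_P_ge_2 by auto
    have poly_r: "poly (of_int_poly r) x = poly (of_int_poly s) x"
      if "poly (of_int_poly P) x = 0" for x :: "'a::comm_ring_1"
      using that unfolding srq by (simp add: hom_distribs)
    have yQ: "y \<in> QQ dl" using QQ_if_int_multiple_ZZ[OF y(3)] D by simp
    have "cmod (poly (of_int_poly r) a) \<le> B'" if a: "a \<in> roots" for a
    proof (cases "a = complex_of_real dl")
      case True
      have "poly (of_int_poly r) a = complex_of_real (poly (of_int_poly r) dl)"
        unfolding True using of_real_hom.poly_map_poly[of "of_int_poly r" dl]
        by (simp add: map_poly_map_poly o_def)
      also have "poly (of_int_poly r) dl = of_int D * y" using poly_r[OF root_dl] s by simp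
      finally show ?thesis using D y unfolding B'_def by (simp add: norm_mult mult_left_mono)
    next
      case False
      have "poly (of_int_poly r) a = emb a (of_int D * y)"
        using a poly_r[of a] unfolding s emb_int_poly[OF a] roots_def by simp
      also have "\<dots> = of_int D * emb a y" using emb_mult[OF a QQ_of_int yQ] emb_of_int[OF a] by simp
      finally show ?thesis using yB a False D unfolding B'_def other_roots_def
        by (force simp: norm_mult intro: mult_left_mono)
    qed
    then have "\<forall>k. \<bar>coeff r k\<bar> \<le> \<lfloor>K * B'\<rfloor>"
      using K[of "of_int_poly r"] deg_r card_roots by (simp add: le_floor_iff)
    then have "r \<in> S" unfolding S_def using deg_r by simp
    moreover have "y = poly (of_int_poly r) dl / of_int D" using poly_r[OF root_dl] s D by (simp add: field_simps)
    ultimately show "y \<in> (\<lambda>s. poly (of_int_poly s) dl / of_int D) ` S" by blast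
  qed
  moreover have "finite S" unfolding S_def by (rule finite_bounded_int_polys)
  ultimately show ?thesis by (meson finite_imageI finite_subset)
qed

end

section \<open>Nontrivial conjugates of \<open>\<beta>\<close>-integers\<close>

locale pisot_alt_base = algebraic_unit P "delta bs" for P bs +
  assumes alt_base: "alt_base bs"
    and conjugates_lt_1: "\<And>z. poly (of_int_poly P) z = 0 \<Longrightarrow> z \<noteq> complex_of_real (delta bs) \<Longrightarrow> cmod z < 1"
    and bases_QQ: "\<And>b. b \<in> set bs \<Longrightarrow> b \<in> QQ (delta bs)"
begin

lemma bs_nonempty: "bs \<noteq> []"
  using alt_base_nonempty[OF alt_base] .

lemma norm_other_root: "a \<in> other_roots \<Longrightarrow> 0 < cmod a \<and> cmod a < 1"
  using conjugates_lt_1[of a] roots_nonzero[of a] unfolding other_roots_def roots_def by simp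

lemma bseq_QQ: "bseq bs k \<in> QQ (delta bs)"
  using bases_QQ[OF bseq_in_set[OF bs_nonempty]] .

lemma grem_QQ: "x \<in> QQ (delta bs) \<Longrightarrow> grem bs x i \<in> QQ (delta bs)"
  by (induction i) (simp_all add: QQ_diff QQ_mult bseq_QQ QQ_of_int)

lemma tail_prod_QQ: "tail_prod bs k \<in> QQ (delta bs)"
  unfolding tail_prod_def by (intro QQ_prod bseq_QQ)

lemma block_value_QQ: "block_value bs y \<in> QQ (delta bs)"
  unfolding block_value_def by (intro QQ_sum QQ_mult QQ_of_int tail_prod_QQ)

lemma block_value_denominator: "\<exists>D>0. \<forall>y. of_int D * block_value bs y \<in> ZZ (delta bs)"
proof -
  obtain D :: int where D: "D > 0" "\<forall>k\<in>{1..length bs}. of_int D * tail_prod bs k \<in> ZZ (delta bs)"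
    using QQ_common_denominator[of "tail_prod bs ` {1..length bs}" "delta bs"] tail_prod_QQ by auto
  have "of_int D * block_value bs y
      = (\<Sum>k=1..length bs. of_int (gdigit bs y k) * (of_int D * tail_prod bs k))" for y
    unfolding block_value_def by (simp add: sum_distrib_left ac_simps)
  moreover have "(\<Sum>k=1..length bs. of_int (gdigit bs y k) * (of_int D * tail_prod bs k)) \<in> ZZ (delta bs)"
    for y
  proof (rule ZZ_sum)
    fix k assume "k \<in> {1..length bs}"
    then show "of_int (gdigit bs y k) * (of_int D * tail_prod bs k) \<in> ZZ (delta bs)"
      using D(2) by (auto intro: ZZ_mult[OF ZZ_of_int])
  qed
  ultimately have "of_int D * block_value bs y \<in> ZZ (delta bs)" for y by simp
  then show ?thesis using D(1) by blast
qed

definition block_bound :: "complex \<Rightarrow> real" where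
  "block_bound a = (\<Sum>k=1..length bs. Max (set bs) * cmod (emb a (tail_prod bs k)))"

lemma block_bound_nonneg: "0 \<le> block_bound a"
  unfolding block_bound_def
  using Max_ge[OF finite_set bseq_in_set[OF bs_nonempty, of 1]] bseq_nonneg[OF alt_base, of 1]
  by (intro sum_nonneg mult_nonneg_nonneg) auto

lemma norm_emb_block_value_le:
  assumes a: "a \<in> roots" and y: "0 \<le> y" "y < 1"
  shows "cmod (emb a (block_value bs y)) \<le> block_bound a"
proof -
  have "emb a (block_value bs y) = (\<Sum>k=1..length bs. of_int (gdigit bs y k) * emb a (tail_prod bs k))"
    unfolding block_value_def
    by (simp add: emb_sum[OF a] emb_mult[OF a QQ_of_int tail_prod_QQ] emb_of_int[OF a]
        QQ_mult[OF QQ_of_int tail_prod_QQ])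
  also have "cmod \<dots> \<le> (\<Sum>k=1..length bs. cmod (of_int (gdigit bs y k) * emb a (tail_prod bs k)))"
    by (rule norm_sum)
  also have "\<dots> \<le> block_bound a" unfolding block_bound_def
  proof (rule sum_mono)
    fix k
    have "0 \<le> gdigit bs y k" "of_int (gdigit bs y k) \<le> Max (set bs)"
      using gdigit_bounds[OF alt_base y, of k] Max_ge[OF finite_set bseq_in_set[OF bs_nonempty, of k]]
      by auto
    then show "cmod (of_int (gdigit bs y k) * emb a (tail_prod bs k))
        \<le> Max (set bs) * cmod (emb a (tail_prod bs k))"
      by (simp add: norm_mult mult_right_mono)
  qed
  finally show ?thesis .
qed

text \<open>Backwards from the last block, using that \<open>\<delta>\<close> is a unit.\<close>

lemma block_remainders_ZZ:
  assumes D: "\<And>y. of_int D * block_value bs y \<in> ZZ (delta bs)"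
    and stop: "grem bs x (K * length bs) = 0" and "m \<le> K"
  shows "of_int D * grem bs x (m * length bs) \<in> ZZ (delta bs)"
proof -
  have "of_int D * grem bs x ((K - j) * length bs) \<in> ZZ (delta bs)" if "j \<le> K" for j
    using that
  proof (induction j)
    case 0 then show ?case using stop ZZ_of_int[of 0] by simp
  next
    case (Suc j)
    define r where "r = grem bs x ((K - Suc j) * length bs)"
    have Suc_K: "Suc (K - Suc j) = K - j" using Suc.prems by simp
    have eq: "delta bs * r = grem bs x ((K - j) * length bs) + block_value bs r"
      using delta_mult_block_remainder[OF bs_nonempty, of x "K - Suc j"] unfolding r_def Suc_K .
    have "of_int D * r = inverse (delta bs) * (of_int D * (delta bs * r))" using dl_gt_1 by simp
    also have "\<dots> = inverse (delta bs) *
        (of_int D * grem bs x ((K - j) * length bs) + of_int D * block_value bs r)"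
      unfolding eq by (simp add: distrib_left)
    also have "\<dots> \<in> ZZ (delta bs)"
      using Suc by (intro ZZ_mult[OF inverse_dl_ZZ] ZZ_add D) simp
    finally show ?case unfolding r_def .
  qed
  from this[of "K - m"] \<open>m \<le> K\<close> show ?thesis by simp
qed

text \<open>Under a conjugate \<open>a\<close>, the block remainders follow \<open>u\<^sub>m\<^sub>+\<^sub>1 = a u\<^sub>m - e\<^sub>m\<close> with
  bounded \<open>e\<^sub>m\<close>; as \<open>|a| < 1\<close> they stay close to \<open>a\<^sup>m u\<^sub>0\<close>.\<close>

lemma norm_emb_block_remainder_le:
  assumes a: "a \<in> other_roots" and x: "0 \<le> x" "x < 1" "x \<in> QQ (delta bs)"
  shows "cmod (emb a (grem bs x (m * length bs)))
    \<le> cmod a ^ m * cmod (emb a x) + block_bound a / (1 - cmod a)"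
proof -
  have aR: "a \<in> roots" using a unfolding other_roots_def by simp
  define r where "r m = grem bs x (m * length bs)" for m
  have "emb a (r (Suc m)) = a * emb a (r m) + - emb a (block_value bs (r m))" for m
  proof -
    have "r (Suc m) = delta bs * r m - block_value bs (r m)"
      using delta_mult_block_remainder[OF bs_nonempty, of x m] unfolding r_def by simp
    then show ?thesis unfolding r_def
      by (simp add: emb_diff[OF aR] emb_mult[OF aR] emb_dl[OF aR] QQ_mult QQ_self grem_QQ[OF x(3)]
          block_value_QQ)
  qed
  moreover have "cmod (- emb a (block_value bs (r m))) \<le> block_bound a" for m
    using norm_emb_block_value_le[OF aR] grem_bounds[OF x(1,2)] unfolding r_def by simp
  ultimately have "cmod (emb a (r m) - a ^ m * emb a (r 0)) \<le> block_bound a / (1 - cmod a)"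
    using norm_other_root[OF a] by (intro norm_affine_recurrence_drift) auto
  moreover have "cmod (emb a (r m))
      \<le> cmod (a ^ m * emb a (r 0)) + cmod (emb a (r m) - a ^ m * emb a (r 0))"
    by (rule norm_triangle_sub)
  ultimately show ?thesis unfolding r_def by (simp add: norm_mult norm_power)
qed

lemma norm_emb_block_remainder_less:
  assumes a: "a \<in> other_roots" and x: "0 \<le> x" "x < 1" "x \<in> QQ (delta bs)"
    and m: "m \<le> K" and small: "cmod a ^ K * cmod (emb a x) < cmod a ^ (K - m)"
  shows "cmod (emb a (grem bs x (m * length bs))) < 1 + block_bound a / (1 - cmod a)"
proof -
  have "cmod a ^ K = cmod a ^ (K - m) * cmod a ^ m" using m by (simp flip: power_add)
  then have "cmod a ^ (K - m) * (cmod a ^ m * cmod (emb a x)) < cmod a ^ (K - m) * 1"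
    using small by (simp add: ac_simps)
  then have "cmod a ^ m * cmod (emb a x) < 1"
    using norm_other_root[OF a] by (simp add: mult_less_cancel_left)
  then show ?thesis using norm_emb_block_remainder_le[OF a x, of m] by simp
qed

theorem conjugate_lower_bound:
  "\<exists>\<kappa>>0. \<forall>z \<in> beta_integers bs - (\<lambda>w. delta bs * w) ` beta_integers bs.
     \<exists>a\<in>other_roots. \<kappa> \<le> cmod (emb a z)"
proof -
  obtain D where D: "D > 0" "\<And>y. of_int D * block_value bs y \<in> ZZ (delta bs)"
    using block_value_denominator by blast
  define B where "B = 1 + (\<Sum>a\<in>other_roots. block_bound a / (1 - cmod a))"
  define F where "F = {y. 0 \<le> y \<and> y < 1 \<and> of_int D * y \<in> ZZ (delta bs) \<and>
    (\<forall>a\<in>other_roots. cmod (emb a y) \<le> B)}"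
  define M where "M = Suc (card F)"
  define \<kappa> where "\<kappa> = Min (cmod ` other_roots) ^ M"
  have fin: "finite other_roots" using finite_roots unfolding other_roots_def by simp
  have "0 < \<kappa>" unfolding \<kappa>_def using fin other_roots_nonempty norm_other_root by simp
  moreover have "\<exists>a\<in>other_roots. \<kappa> \<le> cmod (emb a z)"
    if z: "z \<in> beta_integers bs - (\<lambda>w. delta bs * w) ` beta_integers bs" for z
  proof (rule ccontr)
    assume "\<not> ?thesis"
    then have small: "cmod (emb a z) < \<kappa>" if "a \<in> other_roots" for a using that by force
    obtain k0 where k0: "\<And>K. k0 \<le> K \<Longrightarrow> 0 \<le> z / delta bs ^ K \<and> z / delta bs ^ K < 1 \<and>
        grem bs (z / delta bs ^ K) (K * length bs) = 0 \<and>
        grem bs (z / delta bs ^ K) ((K - 1) * length bs) \<noteq> 0"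
      using beta_integer_non_multiple_remainders[OF alt_base z] by blast
    define K where "K = k0 + M"
    define x where "x = z / delta bs ^ K"
    define r where "r = (\<lambda>m. grem bs x (m * length bs))"
    have x: "0 \<le> x" "x < 1" "r K = 0" "r (K - 1) \<noteq> 0" using k0[of K] unfolding K_def x_def r_def by auto
    have rZ: "of_int D * r m \<in> ZZ (delta bs)" if "m \<le> K" for m
      using block_remainders_ZZ[OF D(2) _ that] x(3) unfolding r_def by simp
    then have xQ: "x \<in> QQ (delta bs)" using QQ_if_int_multiple_ZZ[OF rZ[of 0]] D(1) by (simp add: r_def)
    have in_F: "r m \<in> F" if m: "K - M \<le> m" "m < K" for m
    proof -
      have "cmod (emb a (r m)) \<le> B" if a: "a \<in> other_roots" for a
      proof -
        have aR: "a \<in> roots" using a unfolding other_roots_def by simp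
        have "z = delta bs ^ K * x" unfolding x_def using dl_gt_1 by simp
        then have "emb a z = a ^ K * emb a x"
          using emb_mult[OF aR QQ_power[OF QQ_self] xQ] emb_power[OF aR QQ_self] emb_dl[OF aR] by simp
        then have "cmod a ^ K * cmod (emb a x) < Min (cmod ` other_roots) ^ M"
          using small[OF a] unfolding \<kappa>_def by (simp add: norm_mult norm_power)
        also have "\<dots> \<le> cmod a ^ M"
          using fin a other_roots_nonempty by (intro power_mono) auto
        also have "\<dots> \<le> cmod a ^ (K - m)"
          using m norm_other_root[OF a] by (intro power_decreasing) auto
        finally have "cmod (emb a (r m)) < 1 + block_bound a / (1 - cmod a)"
          using norm_emb_block_remainder_less[OF a x(1,2) xQ, of m K] m unfolding r_def by simp
        moreover have "block_bound a / (1 - cmod a) \<le> B - 1" unfolding B_def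
          using fin a norm_other_root block_bound_nonneg
          by (simp, intro member_le_sum) (auto intro!: divide_nonneg_pos)
        ultimately show ?thesis by simp
      qed
      then show ?thesis unfolding F_def using grem_bounds[OF x(1,2)] rZ m unfolding r_def by simp
    qed
    have "inj_on r {..<K}" using inj_on_block_remainders[of bs x K] x(3,4) unfolding r_def by simp
    then have "inj_on r {K - M..<K}" by (rule inj_on_subset) auto
    then have "card {K - M..<K} = card (r ` {K - M..<K})" by (simp add: card_image)
    also have "\<dots> \<le> card F"
      using in_F finite_bounded_conjugates[OF D(1), of B] unfolding F_def[symmetric]
      by (intro card_mono) auto
    finally have "card {K - M..<K} \<le> card F" .
    then show False unfolding K_def M_def by simp
  qed
  ultimately show ?thesis by blast
qed

end

theorem lemma7:
  fixes bs :: "real list"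
  assumes "alt_base bs"
    and "pisot_unit (delta bs)"
    and "\<forall>b\<in>set bs. b \<in> QQ (delta bs)"
  shows "\<exists>\<kappa>>0. \<forall>z \<in> beta_integers bs - (\<lambda>w. delta bs * w) ` beta_integers bs.
           \<exists>\<psi>. field_embedding (QQ (delta bs)) \<psi> \<and>
                (\<exists>x\<in>QQ (delta bs). \<psi> x \<noteq> complex_of_real x) \<and>
                cmod (\<psi> z) \<ge> \<kappa>"
proof -
  obtain P :: "int poly" where "lead_coeff P = 1" "irreducible P" "poly (of_int_poly P) (delta bs) = 0"
    "coeff P 0 = 1 \<or> coeff P 0 = -1" "delta bs > 1"
    "\<forall>z::complex. poly (of_int_poly P) z = 0 \<and> z \<noteq> complex_of_real (delta bs) \<longrightarrow> cmod z < 1"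
    using assms(2) unfolding pisot_unit_def by blast
  then interpret pisot_alt_base P bs
    using assms(1,3) by unfold_locales auto
  obtain \<kappa> where "\<kappa> > 0" and \<kappa>: "\<And>z. z \<in> beta_integers bs - (\<lambda>w. delta bs * w) ` beta_integers bs \<Longrightarrow>
      \<exists>a\<in>other_roots. \<kappa> \<le> cmod (emb a z)"
    using conjugate_lower_bound by blast
  have "\<exists>\<psi>. field_embedding (QQ (delta bs)) \<psi> \<and> (\<exists>x\<in>QQ (delta bs). \<psi> x \<noteq> complex_of_real x) \<and>
      cmod (\<psi> z) \<ge> \<kappa>" if z: "z \<in> beta_integers bs - (\<lambda>w. delta bs * w) ` beta_integers bs" for z
  proof -
    obtain a where a: "a \<in> roots" "a \<noteq> complex_of_real (delta bs)" "\<kappa> \<le> cmod (emb a z)"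
      using \<kappa>[OF z] unfolding other_roots_def by blast
    then show ?thesis
      using field_embedding_emb[OF a(1)] emb_dl[OF a(1)] QQ_self[of "delta bs"]
      by (intro exI[of _ "emb a"] conjI bexI[of _ "delta bs"]) auto
  qed
  then show ?thesis using \<open>\<kappa> > 0\<close> by blast
qed

end
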